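(* Let $k\ge 1$ and a budget $p$ be given. For $j=1,\dots,k$ let $c_{a,j},c_{c,j}>0$, let $r_{a,j}:(0,\infty)\to(0,\infty)$ be positive, decreasing and at least twice continuously differentiable, and let $r_{c,j}:(0,\infty)\to(0,\infty)$ be positive, increasing and at least twice continuously differentiable. Let $w_j:(0,\infty)\to(0,\infty)$ and $\rho_j:(0,\infty)\to[-1,1]$ ($j=1,\dots,k$) be given functions (cost and correlation of the $j$-th low-fidelity model as a function of its number of training samples) with $1-\rho_j^2(n)\le c_{a,j}r_{a,j}(n)$ and $w_j(n)\le c_{c,j}r_{c,j}(n)$; set $n_0=0$, $w_0=1$. For $j=1$, let $p\ge 2$, define $u_1(n_1)=\frac{1}{p-n_1}\big(c_{a,1}r_{a,1}(n_1)+c_{c,1}r_{c,1}(n_1)\big)$ on $[1,p-1]$, assume $c_{a,1}r_{a,1}''+c_{c,1}r_{c,1}''>0$ on $[1,p-1]$, and let $n_1^*$ be the unique global minimizer of $u_1$ on $[1,p-1]$. Iteratively for $j=2,\dots,k$, given $n_1^*,\dots,n_{j-1}^*$, set $$p_{j-1}=p-\sum_{i=1}^{j-1}n_i^*,\quad \kappa_{j-1}=\sum_{i=0}^{j-2}w_i(n_i^* )\big(1-\rho_{i+1}^2(n_{i+1}^* )\big),\quad \hat c_{a,j}=w_{j-1}(n_{j-1}^* )\,c_{a,j},$$ (with $n_0^*=0$, $w_0(n_0^* )=1$), and consider $$u_j:[1,p_{j-1}-1]\to(0,\infty),\qquad u_j(n_j)=\frac{1}{p_{j-1}-n_j}\Big(\kappa_{j-1}+\hat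 c_{a,j}r_{a,j}(n_j)+c_{c,j}r_{c,j}(n_j)\Big).$$ If $p_{j-1}\ge 2$ and $$\hat c_{a,j}\,r_{a,j}''(n_j)+c_{c,j}\,r_{c,j}''(n_j)>0\quad\text{for all } n_j\in[1,p_{j-1}-1],$$ then there exists a unique minimizer $n_j^*\in[1,p_{j-1}-1]$ of $u_j$.
   Context: This describes the sequential construction of a hierarchy of low-fidelity models for context-aware multi-fidelity Monte Carlo estimation: $n_j$ is the number of high-fidelity evaluations used to train the $j$-th low-fidelity model, $p$ is the total budget in units of high-fidelity evaluations, and $u_j$ is (up to constant factors) an upper bound of the estimator's mean-squared error as a function of $n_j$ with $n_1^*,\dots,n_{j-1}^*$ fixed. *)

theory Defs
  imports Complex_Main
begin

definition wstar :: "(nat \<Rightarrow> real \<Rightarrow> real) \<Rightarrow> (nat \<Rightarrow> real) \<Rightarrow> nat \<Rightarrow> real" where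
  "wstar w nstar i = (if i = 0 then 1 else w i (nstar i))"

definition pbud :: "real \<Rightarrow> (nat \<Rightarrow> real) \<Rightarrow> nat \<Rightarrow> real" where
  "pbud p nstar m = p - (\<Sum>i=1..m. nstar i)"

definition kappa :: "(nat \<Rightarrow> real \<Rightarrow> real) \<Rightarrow> (nat \<Rightarrow> real \<Rightarrow> real) \<Rightarrow> (nat \<Rightarrow> real) \<Rightarrow> nat \<Rightarrow> real" where
  "kappa w rho nstar m = (\<Sum>i<m. wstar w nstar i * (1 - (rho (Suc i) (nstar (Suc i)))\<^sup>2))"

definition uobj :: "real \<Rightarrow> (nat \<Rightarrow> real) \<Rightarrow> (nat \<Rightarrow> real) \<Rightarrow> (nat \<Rightarrow> real \<Rightarrow> real) \<Rightarrow>
    (nat \<Rightarrow> real \<Rightarrow> real) \<Rightarrow> (nat \<Rightarrow> real \<Rightarrow> real) \<Rightarrow> (nat \<Rightarrow> real \<Rightarrow> real) \<Rightarrow>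
    (nat \<Rightarrow> real) \<Rightarrow> nat \<Rightarrow> real \<Rightarrow> real" where
  "uobj p ca cc ra rc w rho nstar j n =
     (kappa w rho nstar (j - 1) + wstar w nstar (j - 1) * ca j * ra j n + cc j * rc j n)
       / (pbud p nstar (j - 1) - n)"

end

theory Submission
  imports Defs
begin

text \<open>Each u_j has the form f(n) / (P - n) with f strictly convex. Any two minimisers x < y
  share the minimal value t, so f - t (P - \<cdot>) vanishes at x and y and is nonnegative in
  between, while strict convexity makes it negative at the midpoint. Existence is compactness.
  Only the two derivatives and the convexity condition at step j are needed.\<close>

lemma f''_gt0_imp_midpoint_strict_convex:
  fixes f f' f'' :: "real \<Rightarrow> real"
  assumes f': "\<And>t. t \<in> {a..b} \<Longrightarrow> (f has_real_derivative f' t) (at t)"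
    and f'': "\<And>t. t \<in> {a..b} \<Longrightarrow> (f' has_real_derivative f'' t) (at t)"
    and pos: "\<And>t. t \<in> {a..b} \<Longrightarrow> f'' t > 0"
    and x: "x \<in> {a..b}" and y: "y \<in> {a..b}" and "x < y"
  shows "f ((x + y) / 2) < (f x + f y) / 2"
proof -
  define z where "z = (x + y) / 2"
  have xz: "x < z" and zy: "z < y"
    using \<open>x < y\<close> by (auto simp: z_def)
  obtain \<xi> where \<xi>: "x < \<xi>" "\<xi> < z" "f z - f x = (z - x) * f' \<xi>"
    using MVT2[OF xz, of f f'] f' x y zy by force
  obtain \<eta> where \<eta>: "z < \<eta>" "\<eta> < y" "f y - f z = (y - z) * f' \<eta>"
    using MVT2[OF zy, of f f'] f' x y xz by force
  have "f' \<xi> < f' \<eta>"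
  proof (rule DERIV_pos_imp_increasing[where f = f'])
    show "\<xi> < \<eta>" using \<xi> \<eta> by simp
    show "\<exists>d. (f' has_real_derivative d) (at t) \<and> d > 0" if "\<xi> \<le> t" "t \<le> \<eta>" for t
      using that \<xi> \<eta> x y f'' pos by (meson atLeastAtMost_iff order.trans less_imp_le)
  qed
  moreover have "z - x = y - z" "z - x > 0"
    using xz by (auto simp: z_def field_simps)
  ultimately have "f z - f x < f y - f z"
    using \<xi>(3) \<eta>(3) by (metis mult_strict_left_mono)
  then show ?thesis
    by (simp add: z_def)
qed

lemma midpoint_strict_convex_imp_ratio_argmin_unique:
  fixes f :: "real \<Rightarrow> real"
  assumes strict: "\<And>x y. x \<in> {a..b} \<Longrightarrow> y \<in> {a..b} \<Longrightarrow> x < y \<Longrightarrow> f ((x + y) / 2) < (f x + f y) / 2"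
    and "b < c"
    and x: "x \<in> {a..b}" "\<forall>m\<in>{a..b}. f x / (c - x) \<le> f m / (c - m)"
    and y: "y \<in> {a..b}" "\<forall>m\<in>{a..b}. f y / (c - y) \<le> f m / (c - m)"
  shows "x = y"
proof -
  have no_two_minimisers: False
    if x: "x \<in> {a..b}" "\<forall>m\<in>{a..b}. f x / (c - x) \<le> f m / (c - m)"
      and y: "y \<in> {a..b}" "\<forall>m\<in>{a..b}. f y / (c - y) \<le> f m / (c - m)"
      and "x < y" for x y
  proof -
    define t where "t = f x / (c - x)"
    define z where "z = (x + y) / 2"
    have z: "z \<in> {a..b}"
      using x y by (auto simp: z_def)
    have pos: "c - x > 0" "c - y > 0" "c - z > 0"
      using x y z \<open>b < c\<close> by auto
    have "f y / (c - y) = t"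
      using x y by (auto simp: t_def intro: order_antisym)
    then have "(f x + f y) / 2 = t * (c - z)"
      using pos by (simp add: t_def z_def field_simps)
    then have "f z / (c - z) < t"
      using strict[OF x(1) y(1) \<open>x < y\<close>] pos by (simp add: z_def pos_divide_less_eq)
    moreover have "t \<le> f z / (c - z)"
      using x z by (simp add: t_def)
    ultimately show False
      by simp
  qed
  show ?thesis
    using no_two_minimisers[OF x y] no_two_minimisers[OF y x] by (cases x y rule: linorder_cases) auto
qed

lemma f''_gt0_imp_ex1_ratio_argmin:
  fixes f f' f'' :: "real \<Rightarrow> real"
  assumes f': "\<And>t. t \<in> {a..b} \<Longrightarrow> (f has_real_derivative f' t) (at t)"
    and f'': "\<And>t. t \<in> {a..b} \<Longrightarrow> (f' has_real_derivative f'' t) (at t)"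
    and pos: "\<And>t. t \<in> {a..b} \<Longrightarrow> f'' t > 0"
    and "a \<le> b" "b < c"
  shows "\<exists>!x. x \<in> {a..b} \<and> (\<forall>m\<in>{a..b}. f x / (c - x) \<le> f m / (c - m))"
proof (rule ex_ex1I)
  have "continuous_on {a..b} f"
    using f' by (intro continuous_at_imp_continuous_on ballI DERIV_isCont) auto
  then have "continuous_on {a..b} (\<lambda>m. f m / (c - m))"
    using \<open>b < c\<close> by (auto intro!: continuous_intros)
  moreover have "{a..b} \<noteq> {}"
    using \<open>a \<le> b\<close> by simp
  ultimately show "\<exists>x. x \<in> {a..b} \<and> (\<forall>m\<in>{a..b}. f x / (c - x) \<le> f m / (c - m))"
    using continuous_attains_inf[OF compact_Icc] by blast
next
  have midpoint: "f ((u + v) / 2) < (f u + f v) / 2"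
    if "u \<in> {a..b}" "v \<in> {a..b}" "u < v" for u v
    using f''_gt0_imp_midpoint_strict_convex[OF f' f'' pos that] .
  show "x = y"
    if "x \<in> {a..b} \<and> (\<forall>m\<in>{a..b}. f x / (c - x) \<le> f m / (c - m))"
      and "y \<in> {a..b} \<and> (\<forall>m\<in>{a..b}. f y / (c - y) \<le> f m / (c - m))" for x y
    using midpoint_strict_convex_imp_ratio_argmin_unique[OF midpoint \<open>b < c\<close>] that by blast
qed

theorem proposition3:
  fixes k :: nat and p :: real
    and ca cc :: "nat \<Rightarrow> real"
    and ra ra' ra'' rc rc' rc'' w rho :: "nat \<Rightarrow> real \<Rightarrow> real"
    and nstar :: "nat \<Rightarrow> real"
    and j :: nat
  assumes k: "k \<ge> 1"
    and ca_pos: "\<And>i. i \<in> {1..k} \<Longrightarrow> ca i > 0"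
    and cc_pos: "\<And>i. i \<in> {1..k} \<Longrightarrow> cc i > 0"
    and ra_pos: "\<And>i x. i \<in> {1..k} \<Longrightarrow> x > 0 \<Longrightarrow> ra i x > 0"
    and ra_dec: "\<And>i. i \<in> {1..k} \<Longrightarrow> antimono_on {0<..} (ra i)"
    and ra_d1: "\<And>i x. i \<in> {1..k} \<Longrightarrow> x > 0 \<Longrightarrow> (ra i has_real_derivative ra' i x) (at x)"
    and ra_d2: "\<And>i x. i \<in> {1..k} \<Longrightarrow> x > 0 \<Longrightarrow> (ra' i has_real_derivative ra'' i x) (at x)"
    and ra_c2: "\<And>i. i \<in> {1..k} \<Longrightarrow> continuous_on {0<..} (ra'' i)"
    and rc_pos: "\<And>i x. i \<in> {1..k} \<Longrightarrow> x > 0 \<Longrightarrow> rc i x > 0"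
    and rc_inc: "\<And>i. i \<in> {1..k} \<Longrightarrow> mono_on {0<..} (rc i)"
    and rc_d1: "\<And>i x. i \<in> {1..k} \<Longrightarrow> x > 0 \<Longrightarrow> (rc i has_real_derivative rc' i x) (at x)"
    and rc_d2: "\<And>i x. i \<in> {1..k} \<Longrightarrow> x > 0 \<Longrightarrow> (rc' i has_real_derivative rc'' i x) (at x)"
    and rc_c2: "\<And>i. i \<in> {1..k} \<Longrightarrow> continuous_on {0<..} (rc'' i)"
    and w_pos: "\<And>i x. i \<in> {1..k} \<Longrightarrow> x > 0 \<Longrightarrow> w i x > 0"
    and rho_range: "\<And>i x. i \<in> {1..k} \<Longrightarrow> x > 0 \<Longrightarrow> rho i x \<in> {-1..1}"
    and rho_bound: "\<And>i x. i \<in> {1..k} \<Longrightarrow> x > 0 \<Longrightarrow> 1 - (rho i x)\<^sup>2 \<le> ca i * ra i x"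
    and w_bound: "\<And>i x. i \<in> {1..k} \<Longrightarrow> x > 0 \<Longrightarrow> w i x \<le> cc i * rc i x"
    and j: "j \<in> {1..k}"
    and prev_budget: "\<And>i. i \<in> {1..<j} \<Longrightarrow> pbud p nstar (i - 1) \<ge> 2"
    and prev_convex: "\<And>i n. i \<in> {1..<j} \<Longrightarrow> n \<in> {1..pbud p nstar (i - 1) - 1} \<Longrightarrow>
         wstar w nstar (i - 1) * ca i * ra'' i n + cc i * rc'' i n > 0"
    and prev_min: "\<And>i. i \<in> {1..<j} \<Longrightarrow>
         nstar i \<in> {1..pbud p nstar (i - 1) - 1} \<and>
         (\<forall>m\<in>{1..pbud p nstar (i - 1) - 1}. uobj p ca cc ra rc w rho nstar i (nstar i)
                                              \<le> uobj p ca cc ra rc w rho nstar i m)"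
    and prev_unique: "\<And>i x. i \<in> {1..<j} \<Longrightarrow> x \<in> {1..pbud p nstar (i - 1) - 1} \<Longrightarrow>
         (\<forall>m\<in>{1..pbud p nstar (i - 1) - 1}. uobj p ca cc ra rc w rho nstar i x
                                              \<le> uobj p ca cc ra rc w rho nstar i m) \<Longrightarrow> x = nstar i"
    and budget: "pbud p nstar (j - 1) \<ge> 2"
    and convex: "\<And>n. n \<in> {1..pbud p nstar (j - 1) - 1} \<Longrightarrow>
         wstar w nstar (j - 1) * ca j * ra'' j n + cc j * rc'' j n > 0"
  shows "\<exists>!x. x \<in> {1..pbud p nstar (j - 1) - 1} \<and>
           (\<forall>m\<in>{1..pbud p nstar (j - 1) - 1}. uobj p ca cc ra rc w rho nstar j x
                                                \<le> uobj p ca cc ra rc w rho nstar j m)"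
proof -
  define P where "P = pbud p nstar (j - 1)"
  define A where "A = wstar w nstar (j - 1) * ca j"
  define f where "f = (\<lambda>n. kappa w rho nstar (j - 1) + A * ra j n + cc j * rc j n)"
  have u_eq: "uobj p ca cc ra rc w rho nstar j = (\<lambda>n. f n / (P - n))"
    by (auto simp: uobj_def f_def P_def A_def algebra_simps)
  have "\<exists>!x. x \<in> {1..P - 1} \<and> (\<forall>m\<in>{1..P - 1}. f x / (P - x) \<le> f m / (P - m))"
  proof (rule f''_gt0_imp_ex1_ratio_argmin)
    show "(f has_real_derivative A * ra' j t + cc j * rc' j t) (at t)" if "t \<in> {1..P - 1}" for t
      unfolding f_def using that j by (auto intro!: derivative_eq_intros ra_d1 rc_d1)
    show "((\<lambda>t. A * ra' j t + cc j * rc' j t) has_real_derivative A * ra'' j t + cc j * rc'' j t) (at t)"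
      if "t \<in> {1..P - 1}" for t
      using that j by (auto intro!: derivative_eq_intros ra_d2 rc_d2)
    show "A * ra'' j t + cc j * rc'' j t > 0" if "t \<in> {1..P - 1}" for t
      using convex that by (simp add: A_def P_def)
  qed (use budget P_def in auto)
  then show ?thesis
    by (simp add: u_eq P_def)
qed

end
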